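(* Let $R\subseteq S_n$ be a top-$k$ partial ranking, $\sigma\in R$ and $\tau\in S_n$. Then $$d(A_R(\sigma),\tau)=d(\sigma,\tau)+\binom{n-k}2-2\,d(\sigma,\Pi_R(\tau)).$$
   Context: $S_n$ is the symmetric group on $[n]$; $\sigma\in S_n$ is identified with the full ranking $\sigma(1)\succ\cdots\succ\sigma(n)$. For distinct items $x,y$, $\{x,y\}$ is discordant for $\sigma,\tau$ if $(\sigma^{-1}(x)-\sigma^{-1}(y))(\tau^{-1}(x)-\tau^{-1}(y))<0$. The Kendall distance $d(\sigma,\tau)$ is the number of unordered discordant pairs. For $0\le k\le n$ and distinct $a_1,\dots,a_k\in[n]$, the top-$k$ partial ranking is the set $R=\{\sigma\in S_n:\sigma(i)=a_i,\ i\le k\}$. The antithetic operator $A_R:R\to R$ is $A_R(\sigma)(i)=a_i$ for $i\le k$ and $A_R(\sigma)(k+j)=\sigma(n+1-j)$ for $j=1,\dots,n-k$. For $\tau\in S_n$, $\Pi_R(\tau)$ denotes the unique element of $R$ minimising $\rho\mapsto d(\rho,\tau)$ over $\rho\in R$. *)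

theory Defs
  imports "HOL-Combinatorics.Combinatorics"
begin

text \<open>Rankings: a permutation sigma of {1..n} (sigma permutes {1..n}), sigma i is the item
  at position i; the position of item x is inv sigma x.\<close>

definition discordant :: "(nat \<Rightarrow> nat) \<Rightarrow> (nat \<Rightarrow> nat) \<Rightarrow> nat \<Rightarrow> nat \<Rightarrow> bool" where
  "discordant \<sigma> \<tau> x y \<longleftrightarrow>
     (int (inv \<sigma> x) - int (inv \<sigma> y)) * (int (inv \<tau> x) - int (inv \<tau> y)) < 0"

definition kendall :: "nat \<Rightarrow> (nat \<Rightarrow> nat) \<Rightarrow> (nat \<Rightarrow> nat) \<Rightarrow> nat" where
  "kendall n \<sigma> \<tau> = card {(x, y). x \<in> {1..n} \<and> y \<in> {1..n} \<and> x < y \<and> discordant \<sigma> \<tau> x y}"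

definition topk :: "nat \<Rightarrow> nat \<Rightarrow> (nat \<Rightarrow> nat) \<Rightarrow> (nat \<Rightarrow> nat) set" where
  "topk n k a = {\<sigma>. \<sigma> permutes {1..n} \<and> (\<forall>i\<in>{1..k}. \<sigma> i = a i)}"

text \<open>Antithetic operator A_R (only meaningful on R; extended by identity outside [n]).\<close>
definition antithetic :: "nat \<Rightarrow> nat \<Rightarrow> (nat \<Rightarrow> nat) \<Rightarrow> (nat \<Rightarrow> nat) \<Rightarrow> (nat \<Rightarrow> nat)" where
  "antithetic n k a \<sigma> = (\<lambda>i. if i \<in> {1..k} then a i
                              else if i \<in> {k+1..n} then \<sigma> (n + 1 - (i - k))
                              else i)"

definition proj :: "nat \<Rightarrow> nat \<Rightarrow> (nat \<Rightarrow> nat) \<Rightarrow> (nat \<Rightarrow> nat) \<Rightarrow> (nat \<Rightarrow> nat)" where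
  "proj n k a \<tau> = (THE \<rho>. \<rho> \<in> topk n k a \<and>
                      (\<forall>\<rho>'\<in>topk n k a. kendall n \<rho> \<tau> \<le> kendall n \<rho>' \<tau>))"

end

theory Submission
  imports Defs
begin

text \<open>Call a pair of items a bottom pair if neither item is one of the fixed top items
  \<open>a\<^sub>1, \<dots>, a\<^sub>k\<close>. Every ranking in \<open>R\<close> orders each pair that is not a bottom pair in the same
  way, so on those pairs \<open>\<sigma>\<close>, \<open>A\<^sub>R(\<sigma>)\<close> and \<open>\<Pi>\<^sub>R(\<tau>)\<close> are indistinguishable. On bottom pairs,
  \<open>A\<^sub>R(\<sigma>)\<close> reverses \<open>\<sigma>\<close>, while \<open>\<Pi>\<^sub>R(\<tau>)\<close> is the element of \<open>R\<close> that orders the bottom items as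
  \<open>\<tau>\<close> does (it is the unique minimiser because \<open>d(\<rho>, \<rho>') = 0\<close> forces \<open>\<rho> = \<rho>'\<close>). So if \<open>c\<close>
  counts the discordant non-bottom pairs of \<open>\<sigma>, \<tau>\<close> and \<open>D\<close> the discordant bottom pairs, then
  \<open>d(\<sigma>, \<tau>) = c + D\<close>, \<open>d(A\<^sub>R(\<sigma>), \<tau>) = c + (n - k choose 2) - D\<close> and \<open>d(\<sigma>, \<Pi>\<^sub>R(\<tau>)) = D\<close>.\<close>

lemma discordant_iff:
  assumes "bij \<rho>" "bij \<tau>"
  shows "discordant \<rho> \<tau> x y \<longleftrightarrow> (inv \<rho> x < inv \<rho> y) \<noteq> (inv \<tau> x < inv \<tau> y)"
proof (cases "x = y")
  case False
  with assms have "inv \<rho> x \<noteq> inv \<rho> y" "inv \<tau> x \<noteq> inv \<tau> y"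
    by (metis bij_inv_eq_iff)+
  then show ?thesis
    unfolding discordant_def by (auto simp: mult_less_0_iff)
qed (simp add: discordant_def)

lemma discordant_commute: "discordant \<rho> \<tau> x y = discordant \<rho> \<tau> y x"
  unfolding discordant_def by (auto simp: mult_less_0_iff)

lemma not_discordant_self: "\<not> discordant \<rho> \<rho> x y"
  unfolding discordant_def by (simp add: not_less)

definition increasing_pairs :: "nat set \<Rightarrow> (nat \<times> nat) set" where
  "increasing_pairs S = {(x, y). x \<in> S \<and> y \<in> S \<and> x < y}"

definition discordant_pairs ::
    "(nat \<Rightarrow> nat) \<Rightarrow> (nat \<Rightarrow> nat) \<Rightarrow> (nat \<times> nat) set \<Rightarrow> (nat \<times> nat) set" where
  "discordant_pairs \<rho> \<tau> P = {(x, y) \<in> P. discordant \<rho> \<tau> x y}"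

lemma finite_increasing_pairs: "finite S \<Longrightarrow> finite (increasing_pairs S)"
  by (rule finite_subset[of _ "S \<times> S"]) (auto simp: increasing_pairs_def)

lemma card_increasing_pairs:
  assumes "finite S"
  shows "card (increasing_pairs S) = card S choose 2"
proof -
  have "bij_betw (\<lambda>(x, y). {x, y}) (increasing_pairs S) {T. T \<subseteq> S \<and> card T = 2}"
  proof (rule bij_betw_imageI)
    show "inj_on (\<lambda>(x, y). {x, y}) (increasing_pairs S)"
      by (auto simp: inj_on_def increasing_pairs_def doubleton_eq_iff)
    show "(\<lambda>(x, y). {x, y}) ` increasing_pairs S = {T. T \<subseteq> S \<and> card T = 2}"
    proof (intro equalityI subsetI)
      fix T assume T: "T \<in> {T. T \<subseteq> S \<and> card T = 2}"
      then obtain x y where "T = {x, y}" "x \<noteq> y"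
        by (auto simp: card_2_iff)
      then have "T = {min x y, max x y}" "min x y < max x y"
        by (auto simp: min_def max_def)
      with T show "T \<in> (\<lambda>(x, y). {x, y}) ` increasing_pairs S"
        by (auto simp: increasing_pairs_def)
    qed (auto simp: increasing_pairs_def)
  qed
  then show ?thesis
    by (simp add: bij_betw_same_card n_subsets[OF assms])
qed

lemma kendall_eq_card_discordant_pairs:
  "kendall n \<rho> \<tau> = card (discordant_pairs \<rho> \<tau> (increasing_pairs {1..n}))"
  unfolding kendall_def discordant_pairs_def increasing_pairs_def
  by (rule arg_cong[where f = card]) auto

lemma finite_discordant_pairs: "finite P \<Longrightarrow> finite (discordant_pairs \<rho> \<tau> P)"
  unfolding discordant_pairs_def by (rule finite_subset[of _ P]) auto

lemma kendall_split:
  assumes "B \<subseteq> {1..n}"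
  shows "kendall n \<rho> \<tau> =
           card (discordant_pairs \<rho> \<tau> (increasing_pairs {1..n} - increasing_pairs B))
         + card (discordant_pairs \<rho> \<tau> (increasing_pairs B))"
proof -
  have "increasing_pairs B \<subseteq> increasing_pairs {1..n}"
    using assms by (auto simp: increasing_pairs_def)
  then have "discordant_pairs \<rho> \<tau> (increasing_pairs {1..n}) =
      discordant_pairs \<rho> \<tau> (increasing_pairs {1..n} - increasing_pairs B)
      \<union> discordant_pairs \<rho> \<tau> (increasing_pairs B)"
    by (auto simp: discordant_pairs_def)
  moreover have "card (discordant_pairs \<rho> \<tau> (increasing_pairs {1..n} - increasing_pairs B)
      \<union> discordant_pairs \<rho> \<tau> (increasing_pairs B)) =
      card (discordant_pairs \<rho> \<tau> (increasing_pairs {1..n} - increasing_pairs B))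
      + card (discordant_pairs \<rho> \<tau> (increasing_pairs B))"
    using assms
    by (intro card_Un_disjoint finite_discordant_pairs finite_Diff finite_increasing_pairs)
       (auto simp: discordant_pairs_def intro: finite_subset)
  ultimately show ?thesis
    unfolding kendall_eq_card_discordant_pairs by simp
qed

lemma permutes_interval_eq_card:
  assumes \<pi>: "\<pi> permutes {1..n}" and i: "i \<in> {1..n}"
  shows "\<pi> i = card {j \<in> {1..n}. \<pi> j \<le> \<pi> i}"
proof -
  have in_range: "\<pi> j \<in> {1..n} \<longleftrightarrow> j \<in> {1..n}" "inv \<pi> j \<in> {1..n} \<longleftrightarrow> j \<in> {1..n}" for j
    using permutes_in_image[OF \<pi>] permutes_in_image[OF permutes_inv[OF \<pi>]] by blast+
  have "{j \<in> {1..n}. \<pi> j \<le> \<pi> i} = inv \<pi> ` {1..\<pi> i}"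
  proof (intro equalityI subsetI)
    fix j assume "j \<in> {j \<in> {1..n}. \<pi> j \<le> \<pi> i}"
    then have "\<pi> j \<in> {1..\<pi> i}" and "j = inv \<pi> (\<pi> j)"
      using in_range(1)[of j] permutes_inverses(2)[OF \<pi>] by auto
    then show "j \<in> inv \<pi> ` {1..\<pi> i}" by blast
  next
    fix j assume "j \<in> inv \<pi> ` {1..\<pi> i}"
    then obtain m where "m \<in> {1..\<pi> i}" "j = inv \<pi> m" by blast
    moreover have "m \<in> {1..n}"
      using \<open>m \<in> {1..\<pi> i}\<close> in_range(1)[of i] i by auto
    ultimately show "j \<in> {j \<in> {1..n}. \<pi> j \<le> \<pi> i}"
      using in_range(2)[of m] permutes_inverses(1)[OF \<pi>] by auto
  qed
  moreover have "inj (inv \<pi>)"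
    using \<pi> permutes_inj permutes_inv by blast
  ultimately show ?thesis
    by (simp add: card_image inj_on_subset)
qed

lemma kendall_eq_0_imp_eq:
  assumes \<rho>: "\<rho> permutes {1..n}" and \<rho>': "\<rho>' permutes {1..n}" and "kendall n \<rho> \<rho>' = 0"
  shows "\<rho> = \<rho>'"
proof -
  have "discordant_pairs \<rho> \<rho>' (increasing_pairs {1..n}) = {}"
    using assms(3) finite_discordant_pairs[OF finite_increasing_pairs[of "{1..n}"]]
    unfolding kendall_eq_card_discordant_pairs by (metis card_0_eq finite_atLeastAtMost)
  then have concordant_increasing: "\<not> discordant \<rho> \<rho>' x y"
    if "(x, y) \<in> increasing_pairs {1..n}" for x y
    using that by (auto simp: discordant_pairs_def)
  have concordant: "\<not> discordant \<rho> \<rho>' x y" if "x \<in> {1..n}" "y \<in> {1..n}" for x y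
  proof (cases x y rule: linorder_cases)
    case less
    with that concordant_increasing show ?thesis by (simp add: increasing_pairs_def)
  next
    case equal
    then show ?thesis by (simp add: discordant_def)
  next
    case greater
    with that concordant_increasing[of y x] show ?thesis
      by (simp add: increasing_pairs_def discordant_commute[of _ _ x y])
  qed
  have same_order: "inv \<rho> y \<le> inv \<rho> x \<longleftrightarrow> inv \<rho>' y \<le> inv \<rho>' x"
    if "x \<in> {1..n}" "y \<in> {1..n}" for x y
    using concordant[OF that] discordant_iff[OF permutes_bij[OF \<rho>] permutes_bij[OF \<rho>']]
    by (meson not_le)
  have "inv \<rho> x = inv \<rho>' x" for x
  proof (cases "x \<in> {1..n}")
    case True
    then show ?thesis
      using permutes_interval_eq_card[OF permutes_inv[OF \<rho>] True]
        permutes_interval_eq_card[OF permutes_inv[OF \<rho>'] True] same_order[OF True]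
      by (metis (no_types, lifting) Collect_cong)
  qed (metis \<rho> \<rho>' permutes_inv permutes_not_in)
  then show ?thesis
    by (metis \<rho> \<rho>' ext inv_inv_eq permutes_bij)
qed

lemma sorted_wrt_less_nth_iff:
  fixes f :: "'a \<Rightarrow> 'b::linorder"
  assumes "sorted_wrt (\<lambda>x y. f x < f y) xs" "i < length xs" "j < length xs"
  shows "f (xs ! i) < f (xs ! j) \<longleftrightarrow> i < j"
  using sorted_wrt_nth_less[OF assms(1)] assms(2,3)
  by (metis less_asym linorder_neqE_nat less_irrefl)

definition ranking_of_list :: "nat list \<Rightarrow> nat \<Rightarrow> nat" where
  "ranking_of_list xs i = (if i \<in> {1..length xs} then xs ! (i - 1) else i)"

lemma ranking_of_list_permutes:
  assumes "distinct xs" "set xs = {1..length xs}"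
  shows "ranking_of_list xs permutes {1..length xs}"
proof (rule bij_imp_permutes)
  have "bij_betw (\<lambda>i. i - 1) {1..length xs} {..<length xs}"
    by (rule bij_betw_byWitness[where f' = Suc]) auto
  then have "bij_betw ((!) xs \<circ> (\<lambda>i. i - 1)) {1..length xs} {1..length xs}"
    using bij_betw_nth[OF assms(1) refl assms(2)[symmetric]] by (rule bij_betw_trans)
  moreover have "bij_betw (ranking_of_list xs) {1..length xs} {1..length xs} =
      bij_betw ((!) xs \<circ> (\<lambda>i. i - 1)) {1..length xs} {1..length xs}"
    by (rule bij_betw_cong) (simp add: ranking_of_list_def)
  ultimately show "bij_betw (ranking_of_list xs) {1..length xs} {1..length xs}"
    by simp
qed (auto simp: ranking_of_list_def)

lemma inv_ranking_of_list_nth: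
  assumes "distinct xs" "set xs = {1..length xs}" "j < length xs"
  shows "inv (ranking_of_list xs) (xs ! j) = Suc j"
  using assms(3) permutes_inv_eq[OF ranking_of_list_permutes[OF assms(1,2)]]
  by (simp add: ranking_of_list_def)

lemma topk_permutes: "\<rho> \<in> topk n k a \<Longrightarrow> \<rho> permutes {1..n}"
  by (simp add: topk_def)

locale top_k_partial_ranking =
  fixes n k :: nat and a :: "nat \<Rightarrow> nat"
  assumes k_le_n: "k \<le> n" and inj_a: "inj_on a {1..k}" and a_range: "a ` {1..k} \<subseteq> {1..n}"
begin

definition bottom :: "nat set" where
  "bottom = {1..n} - a ` {1..k}"

lemma bottom_subset: "bottom \<subseteq> {1..n}"
  by (auto simp: bottom_def)

lemma card_bottom: "card bottom = n - k"
  unfolding bottom_def using a_range inj_a by (simp add: card_Diff_subset card_image)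

lemma inv_topk_top: "\<rho> \<in> topk n k a \<Longrightarrow> i \<in> {1..k} \<Longrightarrow> inv \<rho> (a i) = i"
  using permutes_inv_eq[OF topk_permutes] by (auto simp: topk_def)

lemma inv_topk_bottom:
  assumes \<rho>: "\<rho> \<in> topk n k a" and y: "y \<in> bottom"
  shows "inv \<rho> y \<in> {k+1..n}"
proof -
  have "inv \<rho> y \<in> {1..n}"
    using y bottom_subset permutes_in_image[OF permutes_inv[OF topk_permutes[OF \<rho>]]] by blast
  moreover have "inv \<rho> y \<notin> {1..k}"
  proof
    assume "inv \<rho> y \<in> {1..k}"
    then have "y \<in> a ` {1..k}"
      using \<rho> permutes_inverses(1)[OF topk_permutes[OF \<rho>], of y]
      by (force simp: topk_def)
    with y show False by (simp add: bottom_def)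
  qed
  ultimately show ?thesis by auto
qed

lemma topk_order_outside_bottom:
  assumes \<rho>: "\<rho> \<in> topk n k a" and \<rho>': "\<rho>' \<in> topk n k a"
    and "x \<in> {1..n}" "y \<in> {1..n}" "x \<notin> bottom \<or> y \<notin> bottom"
  shows "inv \<rho> x < inv \<rho> y \<longleftrightarrow> inv \<rho>' x < inv \<rho>' y"
proof -
  have top_item: "inv \<rho> z = inv \<rho>' z \<and> inv \<rho> z \<le> k" if z: "z \<in> {1..n}" "z \<notin> bottom" for z
  proof -
    obtain i where "i \<in> {1..k}" "z = a i"
      using z unfolding bottom_def by blast
    then show ?thesis
      using inv_topk_top[OF \<rho>] inv_topk_top[OF \<rho>'] by simp
  qed
  have bottom_item: "k < inv \<rho> z \<and> k < inv \<rho>' z" if "z \<in> bottom" for z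
    using inv_topk_bottom[OF \<rho> that] inv_topk_bottom[OF \<rho>' that] by simp
  show ?thesis
    using top_item[of x] top_item[of y] bottom_item[of x] bottom_item[of y] assms(3-5)
    by (cases "x \<in> bottom"; cases "y \<in> bottom") auto
qed

definition outer_pairs :: "(nat \<times> nat) set" where
  "outer_pairs = increasing_pairs {1..n} - increasing_pairs bottom"

lemma kendall_eq_outer_plus_bottom:
  "kendall n \<rho> \<tau> = card (discordant_pairs \<rho> \<tau> outer_pairs)
                  + card (discordant_pairs \<rho> \<tau> (increasing_pairs bottom))"
  unfolding outer_pairs_def using bottom_subset by (rule kendall_split)

lemma discordant_pairs_outer_topk:
  assumes \<rho>: "\<rho> \<in> topk n k a" and \<rho>': "\<rho>' \<in> topk n k a" and \<tau>: "bij \<tau>"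
  shows "discordant_pairs \<rho> \<tau> outer_pairs = discordant_pairs \<rho>' \<tau> outer_pairs"
proof -
  have "discordant \<rho> \<tau> x y \<longleftrightarrow> discordant \<rho>' \<tau> x y" if "(x, y) \<in> outer_pairs" for x y
    using that topk_order_outside_bottom[OF \<rho> \<rho>', of x y]
      discordant_iff[OF permutes_bij[OF topk_permutes[OF \<rho>]] \<tau>]
      discordant_iff[OF permutes_bij[OF topk_permutes[OF \<rho>']] \<tau>]
    by (auto simp: outer_pairs_def increasing_pairs_def)
  then show ?thesis
    by (auto simp: discordant_pairs_def)
qed

lemma discordant_pairs_outer_topk_empty:
  "\<rho> \<in> topk n k a \<Longrightarrow> \<rho>' \<in> topk n k a \<Longrightarrow> discordant_pairs \<rho> \<rho>' outer_pairs = {}"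
  using discordant_pairs_outer_topk[of \<rho> \<rho>' \<rho>'] permutes_bij[OF topk_permutes]
  by (simp add: discordant_pairs_def not_discordant_self)

definition reverse_tail :: "nat \<Rightarrow> nat" where
  "reverse_tail i = (if i \<in> {k+1..n} then n + k + 1 - i else i)"

lemma reverse_tail_reverse_tail [simp]: "reverse_tail (reverse_tail i) = i"
  by (auto simp: reverse_tail_def)

lemma reverse_tail_permutes: "reverse_tail permutes {1..n}"
proof (rule bij_imp_permutes)
  show "bij_betw reverse_tail {1..n} {1..n}"
    by (rule bij_betw_byWitness[where f' = reverse_tail]) (auto simp: reverse_tail_def)
qed (auto simp: reverse_tail_def)

lemma antithetic_eq_comp:
  assumes \<sigma>: "\<sigma> \<in> topk n k a"
  shows "antithetic n k a \<sigma> = \<sigma> \<circ> reverse_tail"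
proof
  fix i
  have "\<sigma> i = i" if "i \<notin> {1..n}"
    using permutes_not_in[OF topk_permutes[OF \<sigma>] that] .
  with \<sigma> k_le_n show "antithetic n k a \<sigma> i = (\<sigma> \<circ> reverse_tail) i"
    by (auto simp: antithetic_def reverse_tail_def topk_def Suc_diff_le)
qed

lemma antithetic_topk: "\<sigma> \<in> topk n k a \<Longrightarrow> antithetic n k a \<sigma> \<in> topk n k a"
  using antithetic_eq_comp permutes_compose[OF reverse_tail_permutes topk_permutes]
  by (auto simp: topk_def reverse_tail_def)

lemma inv_antithetic:
  assumes "\<sigma> \<in> topk n k a"
  shows "inv (antithetic n k a \<sigma>) = reverse_tail \<circ> inv \<sigma>"
proof -
  have "inv reverse_tail = reverse_tail"
    by (rule inv_unique_comp) (simp_all add: fun_eq_iff)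
  then show ?thesis
    using assms o_inv_distrib[OF permutes_bij[OF topk_permutes] permutes_bij[OF reverse_tail_permutes]]
    by (simp add: antithetic_eq_comp)
qed

lemma antithetic_reverses_bottom:
  assumes "\<sigma> \<in> topk n k a" "x \<in> bottom" "y \<in> bottom"
  shows "inv (antithetic n k a \<sigma>) x < inv (antithetic n k a \<sigma>) y \<longleftrightarrow> inv \<sigma> y < inv \<sigma> x"
  using inv_topk_bottom[OF assms(1,2)] inv_topk_bottom[OF assms(1,3)]
  by (auto simp: inv_antithetic[OF assms(1)] reverse_tail_def)

lemma discordant_pairs_antithetic_bottom:
  assumes \<sigma>: "\<sigma> \<in> topk n k a" and \<tau>: "bij \<tau>"
  shows "discordant_pairs (antithetic n k a \<sigma>) \<tau> (increasing_pairs bottom)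
       = increasing_pairs bottom - discordant_pairs \<sigma> \<tau> (increasing_pairs bottom)"
proof -
  have "discordant (antithetic n k a \<sigma>) \<tau> x y \<longleftrightarrow> \<not> discordant \<sigma> \<tau> x y"
    if "x \<in> bottom" "y \<in> bottom" "x < y" for x y
  proof -
    have "inv \<sigma> x \<noteq> inv \<sigma> y"
      using \<open>x < y\<close> by (metis less_irrefl permutes_inverses(1)[OF topk_permutes[OF \<sigma>]])
    then show ?thesis
      using antithetic_reverses_bottom[OF \<sigma> that(1,2)]
        discordant_iff[OF permutes_bij[OF topk_permutes[OF antithetic_topk[OF \<sigma>]]] \<tau>]
        discordant_iff[OF permutes_bij[OF topk_permutes[OF \<sigma>]] \<tau>]
      by auto
  qed
  then show ?thesis
    by (auto simp: discordant_pairs_def increasing_pairs_def)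
qed

lemma kendall_antithetic:
  assumes \<sigma>: "\<sigma> \<in> topk n k a" and \<tau>: "bij \<tau>"
  shows "kendall n (antithetic n k a \<sigma>) \<tau> + card (discordant_pairs \<sigma> \<tau> (increasing_pairs bottom))
       = card (discordant_pairs \<sigma> \<tau> outer_pairs) + (n - k choose 2)"
proof -
  let ?D = "discordant_pairs \<sigma> \<tau> (increasing_pairs bottom)"
  have fin: "finite (increasing_pairs bottom)"
    using bottom_subset by (simp add: finite_increasing_pairs finite_subset)
  have sub: "?D \<subseteq> increasing_pairs bottom"
    by (auto simp: discordant_pairs_def)
  have "card (increasing_pairs bottom - ?D) + card ?D = card (increasing_pairs bottom)"
    using card_Diff_subset[OF finite_subset[OF sub fin] sub] card_mono[OF fin sub] by simp
  also have "\<dots> = n - k choose 2"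
    using bottom_subset by (simp add: card_increasing_pairs card_bottom finite_subset)
  finally show ?thesis
    using kendall_eq_outer_plus_bottom[of "antithetic n k a \<sigma>" \<tau>]
      discordant_pairs_outer_topk[OF antithetic_topk[OF \<sigma>] \<sigma> \<tau>]
      discordant_pairs_antithetic_bottom[OF \<sigma> \<tau>]
    by simp
qed

context
  fixes \<tau> :: "nat \<Rightarrow> nat"
  assumes \<tau>: "\<tau> permutes {1..n}"
begin

definition bottom_list :: "nat list" where
  "bottom_list = filter (\<lambda>x. x \<in> bottom) (map \<tau> [1..<n+1])"

lemma set_bottom_list: "set bottom_list = bottom"
  using permutes_image[OF \<tau>] bottom_subset
  by (auto simp del: upt_Suc simp: bottom_list_def atLeastLessThanSuc_atLeastAtMost)

lemma distinct_bottom_list: "distinct bottom_list"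
  using permutes_inj_on[OF \<tau>] by (simp add: bottom_list_def distinct_map)

lemma sorted_bottom_list: "sorted_wrt (\<lambda>x y. inv \<tau> x < inv \<tau> y) bottom_list"
  unfolding bottom_list_def
  by (rule sorted_wrt_filter) (simp del: upt_Suc add: sorted_wrt_map permutes_inverses(2)[OF \<tau>])

lemma length_bottom_list: "length bottom_list = n - k"
  using distinct_card[OF distinct_bottom_list] by (simp add: set_bottom_list card_bottom)

definition projection_list :: "nat list" where
  "projection_list = map a [1..<k+1] @ bottom_list"

lemma length_projection_list: "length projection_list = n"
  using k_le_n by (simp del: upt_Suc add: projection_list_def length_bottom_list)

lemma distinct_projection_list: "distinct projection_list"
  using inj_a distinct_bottom_list set_bottom_list
  by (auto simp del: upt_Suc simp: projection_list_def distinct_map bottom_def atLeastLessThanSuc_atLeastAtMost)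

lemma set_projection_list: "set projection_list = {1..length projection_list}"
  unfolding length_projection_list using a_range set_bottom_list
  by (auto simp del: upt_Suc simp: projection_list_def bottom_def atLeastLessThanSuc_atLeastAtMost)

definition projection :: "nat \<Rightarrow> nat" where
  "projection = ranking_of_list projection_list"

lemma projection_topk: "projection \<in> topk n k a"
proof -
  have "projection permutes {1..n}"
    using ranking_of_list_permutes[OF distinct_projection_list set_projection_list]
    by (simp add: projection_def length_projection_list)
  moreover have "projection i = a i" if "i \<in> {1..k}" for i
    using that k_le_n
    by (auto simp del: upt_Suc simp: projection_def ranking_of_list_def length_projection_list projection_list_def nth_append)
  ultimately show ?thesis
    by (simp add: topk_def)
qed

lemma inv_projection_bottom_list:
  assumes "j < n - k"
  shows "inv projection (bottom_list ! j) = Suc (k + j)"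
proof -
  have "projection_list ! (k + j) = bottom_list ! j"
    by (simp del: upt_Suc add: projection_list_def nth_append)
  then show ?thesis
    using inv_ranking_of_list_nth[OF distinct_projection_list set_projection_list, of "k + j"] assms
    by (simp add: projection_def length_projection_list)
qed

lemma projection_order_bottom:
  assumes "x \<in> bottom" "y \<in> bottom"
  shows "inv projection x < inv projection y \<longleftrightarrow> inv \<tau> x < inv \<tau> y"
proof -
  obtain i j where "i < n - k" "j < n - k" "x = bottom_list ! i" "y = bottom_list ! j"
    using assms by (metis in_set_conv_nth set_bottom_list length_bottom_list)
  then show ?thesis
    using sorted_wrt_less_nth_iff[OF sorted_bottom_list, of i j]
    by (simp add: inv_projection_bottom_list length_bottom_list)
qed

lemma discordant_pairs_projection_bottom:
  assumes "bij \<rho>"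
  shows "discordant_pairs \<rho> projection (increasing_pairs bottom)
       = discordant_pairs \<rho> \<tau> (increasing_pairs bottom)"
  using projection_order_bottom
    discordant_iff[OF assms permutes_bij[OF topk_permutes[OF projection_topk]]]
    discordant_iff[OF assms permutes_bij[OF \<tau>]]
  by (auto simp: discordant_pairs_def increasing_pairs_def)

lemma kendall_projection:
  assumes "\<rho> \<in> topk n k a"
  shows "kendall n \<rho> projection = card (discordant_pairs \<rho> \<tau> (increasing_pairs bottom))"
  using kendall_eq_outer_plus_bottom[of \<rho> projection]
    discordant_pairs_outer_topk_empty[OF assms projection_topk]
    discordant_pairs_projection_bottom[OF permutes_bij[OF topk_permutes[OF assms]]]
  by simp

lemma kendall_projection_eq_outer:
  assumes "\<rho> \<in> topk n k a"
  shows "kendall n projection \<tau> = card (discordant_pairs \<rho> \<tau> outer_pairs)"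
proof -
  have "discordant_pairs projection \<tau> (increasing_pairs bottom) = {}"
    using discordant_pairs_projection_bottom[OF permutes_bij[OF topk_permutes[OF projection_topk]]]
    by (simp add: discordant_pairs_def not_discordant_self)
  then show ?thesis
    using kendall_eq_outer_plus_bottom[of projection \<tau>]
      discordant_pairs_outer_topk[OF projection_topk assms permutes_bij[OF \<tau>]]
    by simp
qed

lemma proj_eq_projection: "proj n k a \<tau> = projection"
  unfolding proj_def
proof (rule the_equality)
  show "projection \<in> topk n k a \<and> (\<forall>\<rho>\<in>topk n k a. kendall n projection \<tau> \<le> kendall n \<rho> \<tau>)"
    using projection_topk kendall_projection_eq_outer kendall_eq_outer_plus_bottom by simp
next
  fix \<rho> assume "\<rho> \<in> topk n k a \<and> (\<forall>\<rho>'\<in>topk n k a. kendall n \<rho> \<tau> \<le> kendall n \<rho>' \<tau>)"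
  then have \<rho>: "\<rho> \<in> topk n k a" and "kendall n \<rho> \<tau> \<le> kendall n projection \<tau>"
    using projection_topk by auto
  then have "kendall n \<rho> projection = 0"
    using kendall_eq_outer_plus_bottom[of \<rho> \<tau>]
    by (simp add: kendall_projection kendall_projection_eq_outer[OF \<rho>])
  then show "\<rho> = projection"
    using kendall_eq_0_imp_eq topk_permutes \<rho> projection_topk by blast
qed

end

end

theorem lemma6:
  fixes n k :: nat and a \<sigma> \<tau> :: "nat \<Rightarrow> nat"
  assumes "k \<le> n"
    and "inj_on a {1..k}" and "a ` {1..k} \<subseteq> {1..n}"
    and "\<sigma> \<in> topk n k a"
    and "\<tau> permutes {1..n}"
  shows "int (kendall n (antithetic n k a \<sigma>) \<tau>)
         = int (kendall n \<sigma> \<tau>) + int ((n - k) choose 2)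
           - 2 * int (kendall n \<sigma> (proj n k a \<tau>))"
proof -
  interpret top_k_partial_ranking n k a
    using assms(1-3) by unfold_locales
  let ?D = "card (discordant_pairs \<sigma> \<tau> (increasing_pairs bottom))"
  have "kendall n \<sigma> \<tau> = card (discordant_pairs \<sigma> \<tau> outer_pairs) + ?D"
    by (rule kendall_eq_outer_plus_bottom)
  moreover have "kendall n (antithetic n k a \<sigma>) \<tau> + ?D
      = card (discordant_pairs \<sigma> \<tau> outer_pairs) + ((n - k) choose 2)"
    using kendall_antithetic[OF assms(4) permutes_bij[OF assms(5)]] .
  moreover have "kendall n \<sigma> (proj n k a \<tau>) = ?D"
    using proj_eq_projection[OF assms(5)] kendall_projection[OF assms(5,4)] by simp
  ultimately show ?thesis
    by linarith
qed

end
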